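(* Consider the single-element, single-slab periodic space-time SBP scheme $$\mathsf D_t\boldsymbol\rho+\tilde{\mathsf D}_x\langle v\boldsymbol g\rangle=-\sigma_a\boldsymbol\rho-\mathsf H_t^{-1}\mathsf t_B\mathsf t_B^\top(\boldsymbol\rho-\boldsymbol\rho(0)),$$ $$\mathsf D_t\boldsymbol g_k+\tfrac{v_k}{\varepsilon}\tilde{\mathsf D}_x\boldsymbol g_k-\tfrac1\varepsilon\langle v\tilde{\mathsf D}_x\boldsymbol g\rangle+\tfrac{v_k}{\varepsilon^2}\tilde{\mathsf D}_x\boldsymbol\rho=-\Big(\tfrac{\sigma_s}{\varepsilon^2}+\sigma_a\Big)\boldsymbol g_k-\mathsf H_t^{-1}\mathsf t_B\mathsf t_B^\top(\boldsymbol g_k-\boldsymbol g_k(0)),\quad k=1,\dots,n_v.$$ This scheme is asymptotic preserving: for fixed discretization, in the formal limit $\varepsilon\to0$ (assuming the discrete derivative approximations remain bounded) it reduces to $$\mathsf D_t\boldsymbol\rho=\tilde{\mathsf D}_x\Big(\tfrac{\langle v^2\rangle}{\sigma_s}\tilde{\mathsf D}_x\boldsymbol\rho\Big)-\sigma_a\boldsymbol\rho-\mathsf H_t^{-1}\mathsf t_B\mathsf t_B^\top(\boldsymbol\rho-\boldsymbol\rho(0)),$$ which is a consistent and stable discretization of the limit equation $\partial_t\rho=\langle v^2\rangle\partial_x\big(\tfrac1{\sigma_s}\partial_x\rho\big)-\sigma_a\rho$.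
   Context: SBP operators: $\bar{\mathsf D}=\bar{\mathsf H}^{-1}\bar{\mathsf Q}$ on nodes $x_0<\dots<x_n$ is a degree-$p$ SBP approximation of $d/dx$ if it differentiates monomials of degree $\le p$ exactly, $\bar{\mathsf H}$ is diagonal symmetric positive definite, and $\bar{\mathsf Q}+\bar{\mathsf Q}^\top=\mathrm{diag}(-1,0,\dots,0,1)=\bar{\boldsymbol t}_R\bar{\boldsymbol t}_R^\top-\bar{\boldsymbol t}_L\bar{\boldsymbol t}_L^\top$ with $\bar{\boldsymbol t}_L,\bar{\boldsymbol t}_R$ the first/last unit vectors. Spatial SBP operator $\bar{\mathsf D}_x=\bar{\mathsf H}_x^{-1}\bar{\mathsf Q}_x$ ($n_x+1$ nodes), temporal $\bar{\mathsf D}_t=\bar{\mathsf H}_t^{-1}\bar{\mathsf Q}_t$ ($n_t+1$ nodes) with first/last unit vectors $\bar{\boldsymbol t}_B,\bar{\boldsymbol t}_T$. $\mathsf D_t=\bar{\mathsf D}_t\otimes\mathsf I_{n_x}$, $\mathsf D_x=\mathsf I_{n_t}\otimes\bar{\mathsf D}_x$, $\mathsf H_t=\bar{\mathsf H}_t\otimes\mathsf I_{n_x}$, $\mathsf H_x=\mathsf I_{n_t}\otimes\bar{\mathsf H}_x$, $\mathsf t_{R/L}=\mathsf I_{n_t}\otimes\bar{\boldsymbol t}_{R/L}$, $\mathsf t_B=\bar{\boldsymbol t}_B\otimes\mathsf I_{n_x}$, where $\mathsf I_{n_x},\mathsf I_{n_t}$ are identities of sizes $n_x+1,n_t+1$.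 $\tilde{\mathsf D}_x=\mathsf D_x-\frac12\mathsf H_x^{-1}\big(\mathsf t_R(\mathsf t_R^\top-\mathsf t_L^\top)-\mathsf t_L(\mathsf t_L^\top-\mathsf t_R^\top)\big)$. Velocity nodes $v_k$, weights $\omega_k$ with $\sum\omega_k=1$, $\sum\omega_kv_k=0$; $\langle\boldsymbol a\rangle=\sum_k\omega_k\boldsymbol a_k$, $\langle v^2\rangle=\sum_k\omega_kv_k^2$. $\varepsilon>0$, $\sigma_s>0$, $\sigma_a\ge0$. A scheme is called asymptotic preserving if, for fixed discretization parameters, in the limit $\varepsilon\to0$ it becomes a consistent (and stable) discretization of the macroscopic limit equation. Stability of the limit scheme means the discrete energy $\frac12\boldsymbol\rho^\top(\bar{\boldsymbol t}_T\bar{\boldsymbol t}_T^\top\otimes\bar{\mathsf H}_x)\boldsymbol\rho$ at the final time is bounded by initial-data terms. *)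

theory Defs
  imports "HOL-Analysis.Analysis"
begin

text \<open>Grid functions: u i j is the value at time node i (0..nt) and space node j (0..nx).\<close>
type_synonym gf = "nat \<Rightarrow> nat \<Rightarrow> real"

text \<open>Degree-p SBP operator D = H^-1 Q on nodes x 0 < ... < x n, H = diag h.
  Q + Q^T = t_R t_R^T - t_L t_L^T; D differentiates monomials of degree <= p exactly.\<close>
definition sbp :: "nat \<Rightarrow> nat \<Rightarrow> (nat \<Rightarrow> real) \<Rightarrow> (nat \<Rightarrow> real) \<Rightarrow> (nat \<Rightarrow> nat \<Rightarrow> real) \<Rightarrow> bool" where
  "sbp n p x h Q \<longleftrightarrow>
     (\<forall>i<n. x i < x (Suc i)) \<and>
     (\<forall>i\<le>n. 0 < h i) \<and>
     (\<forall>i\<le>n. \<forall>j\<le>n. Q i j + Q j i =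
         (if i = n \<and> j = n then 1 else 0) - (if i = 0 \<and> j = 0 then 1 else 0)) \<and>
     (\<forall>q\<le>p. \<forall>i\<le>n. (\<Sum>j=0..n. Q i j * x j ^ q) / h i = of_nat q * x i ^ (q - 1))"

text \<open>D_t = Dbar_t (x) I : acts on the time index.\<close>
definition Dt :: "nat \<Rightarrow> (nat \<Rightarrow> real) \<Rightarrow> (nat \<Rightarrow> nat \<Rightarrow> real) \<Rightarrow> gf \<Rightarrow> gf" where
  "Dt nt ht Qt u = (\<lambda>i j. (\<Sum>l=0..nt. Qt i l * u l j) / ht i)"

text \<open>D_x = I (x) Dbar_x : acts on the space index.\<close>
definition Dx :: "nat \<Rightarrow> (nat \<Rightarrow> real) \<Rightarrow> (nat \<Rightarrow> nat \<Rightarrow> real) \<Rightarrow> gf \<Rightarrow> gf" where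
  "Dx nx hx Qx u = (\<lambda>i j. (\<Sum>l=0..nx. Qx j l * u i l) / hx j)"

text \<open>Periodic operator
  tilde D_x = D_x - 1/2 H_x^-1 (t_R (t_R^T - t_L^T) - t_L (t_L^T - t_R^T)).\<close>
definition Dxt :: "nat \<Rightarrow> (nat \<Rightarrow> real) \<Rightarrow> (nat \<Rightarrow> nat \<Rightarrow> real) \<Rightarrow> gf \<Rightarrow> gf" where
  "Dxt nx hx Qx u = (\<lambda>i j. Dx nx hx Qx u i j
      - (1/2) * ((if j = nx then u i nx - u i 0 else 0)
                 - (if j = 0 then u i 0 - u i nx else 0)) / hx j)"

text \<open>SAT term H_t^-1 t_B t_B^T (u - u(0)), with u(0) the initial data (a spatial vector).\<close>
definition sat :: "(nat \<Rightarrow> real) \<Rightarrow> gf \<Rightarrow> (nat \<Rightarrow> real) \<Rightarrow> gf" where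
  "sat ht u u0 = (\<lambda>i j. if i = 0 then (u 0 j - u0 j) / ht 0 else 0)"

definition vavg :: "nat \<Rightarrow> (nat \<Rightarrow> real) \<Rightarrow> (nat \<Rightarrow> gf) \<Rightarrow> gf" where
  "vavg nv \<omega> a = (\<lambda>i j. \<Sum>k=1..nv. \<omega> k * a k i j)"

definition scheme ::
  "nat \<Rightarrow> (nat \<Rightarrow> real) \<Rightarrow> (nat \<Rightarrow> nat \<Rightarrow> real) \<Rightarrow>
   nat \<Rightarrow> (nat \<Rightarrow> real) \<Rightarrow> (nat \<Rightarrow> nat \<Rightarrow> real) \<Rightarrow>
   nat \<Rightarrow> (nat \<Rightarrow> real) \<Rightarrow> (nat \<Rightarrow> real) \<Rightarrow> real \<Rightarrow> real \<Rightarrow> real \<Rightarrow>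
   (nat \<Rightarrow> real) \<Rightarrow> (nat \<Rightarrow> nat \<Rightarrow> real) \<Rightarrow> gf \<Rightarrow> (nat \<Rightarrow> gf) \<Rightarrow> bool" where
  "scheme nt ht Qt nx hx Qx nv v \<omega> \<sigma>s \<sigma>a \<epsilon> \<rho>0 g0 \<rho> g \<longleftrightarrow>
     (\<forall>i\<le>nt. \<forall>j\<le>nx.
        Dt nt ht Qt \<rho> i j + Dxt nx hx Qx (vavg nv \<omega> (\<lambda>k. \<lambda>i j. v k * g k i j)) i j
          = - \<sigma>a * \<rho> i j - sat ht \<rho> \<rho>0 i j) \<and>
     (\<forall>k\<in>{1..nv}. \<forall>i\<le>nt. \<forall>j\<le>nx.
        Dt nt ht Qt (g k) i j + v k / \<epsilon> * Dxt nx hx Qx (g k) i j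
          - 1 / \<epsilon> * vavg nv \<omega> (\<lambda>k'. \<lambda>i j. v k' * Dxt nx hx Qx (g k') i j) i j
          + v k / \<epsilon>\<^sup>2 * Dxt nx hx Qx \<rho> i j
          = - (\<sigma>s / \<epsilon>\<^sup>2 + \<sigma>a) * g k i j - sat ht (g k) (g0 k) i j)"

definition lim_res ::
  "nat \<Rightarrow> (nat \<Rightarrow> real) \<Rightarrow> (nat \<Rightarrow> nat \<Rightarrow> real) \<Rightarrow>
   nat \<Rightarrow> (nat \<Rightarrow> real) \<Rightarrow> (nat \<Rightarrow> nat \<Rightarrow> real) \<Rightarrow>
   nat \<Rightarrow> (nat \<Rightarrow> real) \<Rightarrow> (nat \<Rightarrow> real) \<Rightarrow> real \<Rightarrow> real \<Rightarrow>
   (nat \<Rightarrow> real) \<Rightarrow> gf \<Rightarrow> gf" where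
  "lim_res nt ht Qt nx hx Qx nv v \<omega> \<sigma>s \<sigma>a \<rho>0 \<rho> =
     (\<lambda>i j. Dt nt ht Qt \<rho> i j
        - Dxt nx hx Qx (\<lambda>i j. (\<Sum>k=1..nv. \<omega> k * v k ^ 2) / \<sigma>s * Dxt nx hx Qx \<rho> i j) i j
        + \<sigma>a * \<rho> i j + sat ht \<rho> \<rho>0 i j)"

definition lim_scheme ::
  "nat \<Rightarrow> (nat \<Rightarrow> real) \<Rightarrow> (nat \<Rightarrow> nat \<Rightarrow> real) \<Rightarrow>
   nat \<Rightarrow> (nat \<Rightarrow> real) \<Rightarrow> (nat \<Rightarrow> nat \<Rightarrow> real) \<Rightarrow>
   nat \<Rightarrow> (nat \<Rightarrow> real) \<Rightarrow> (nat \<Rightarrow> real) \<Rightarrow> real \<Rightarrow> real \<Rightarrow>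
   (nat \<Rightarrow> real) \<Rightarrow> gf \<Rightarrow> bool" where
  "lim_scheme nt ht Qt nx hx Qx nv v \<omega> \<sigma>s \<sigma>a \<rho>0 \<rho> \<longleftrightarrow>
     (\<forall>i\<le>nt. \<forall>j\<le>nx. lim_res nt ht Qt nx hx Qx nv v \<omega> \<sigma>s \<sigma>a \<rho>0 \<rho> i j = 0)"

end

theory Submission
  imports Defs
begin

(* Multiplying the micro equations by eps^2 shows that sigma_s g_k + v_k tilde D_x rho is eps times
   quantities that stay bounded, so g_k tends to -v_k tilde D_x rho / sigma_s (a discrete Fick law);
   inserted into the macro equation this turns the flux <v g> into -<v^2>/sigma_s tilde D_x rho,
   which is the limit scheme.
   Consistency holds because SBP operators differentiate polynomials of degree <= p exactly and
   the periodic correction in tilde D_x vanishes on periodic data.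
   Stability is the energy method: pairing the limit scheme with H rho, the SBP property of Q_t
   telescopes the time derivative into the energies at the final and the initial time; the
   periodic correction makes H_x tilde D_x skew-symmetric, so the diffusion term contributes
   -<v^2>/sigma_s |tilde D_x rho|^2 <= 0; and the SAT term contributes |rho(0) - rho_0|^2 >= 0. *)

lemma sbp_weight_pos: "sbp n p x h Q \<Longrightarrow> i \<le> n \<Longrightarrow> 0 < h i"
  unfolding sbp_def by blast

lemma sbp_Q_plus_transpose:
  "sbp n p x h Q \<Longrightarrow> i \<le> n \<Longrightarrow> j \<le> n \<Longrightarrow>
     Q i j + Q j i = (if i = n \<and> j = n then 1 else 0) - (if i = 0 \<and> j = 0 then 1 else 0)"
  unfolding sbp_def by blast

lemma sbp_exact_monomial:
  "sbp n p x h Q \<Longrightarrow> q \<le> p \<Longrightarrow> i \<le> n \<Longrightarrow>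
     (\<Sum>j=0..n. Q i j * x j ^ q) / h i = of_nat q * x i ^ (q - 1)"
  unfolding sbp_def by blast

lemma sum_boundary_indicators:
  "(\<Sum>j=0..(n::nat). y j * ((if j = n then a else 0) - (if j = 0 then b else 0))) = y n * a - y 0 * (b::real)"
proof -
  have "\<And>j. y j * ((if j = n then a else 0) - (if j = 0 then b else 0))
      = (if j = n then y j * a else 0) - (if j = 0 then y j * b else 0)"
    by (simp add: right_diff_distrib)
  then show ?thesis by (simp add: sum_subtractf sum.delta sum.delta')
qed

lemma sbp_summation_by_parts:
  assumes "sbp n p x h Q"
  shows "(\<Sum>j=0..n. \<Sum>l=0..n. y j * Q j l * w l) + (\<Sum>j=0..n. \<Sum>l=0..n. w j * Q j l * y l)
         = y n * w n - y 0 * w 0"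
proof -
  have "(\<Sum>j=0..n. \<Sum>l=0..n. w j * Q j l * y l) = (\<Sum>j=0..n. \<Sum>l=0..n. y j * Q l j * w l)"
    by (subst sum.swap) (simp add: mult_ac)
  then have "(\<Sum>j=0..n. \<Sum>l=0..n. y j * Q j l * w l) + (\<Sum>j=0..n. \<Sum>l=0..n. w j * Q j l * y l)
      = (\<Sum>j=0..n. \<Sum>l=0..n. y j * w l * (Q j l + Q l j))"
    by (simp add: sum.distrib[symmetric] algebra_simps)
  also have "\<dots> = (\<Sum>j=0..n. \<Sum>l=0..n.
      (if l = n then (if j = n then y j * w l else 0) else 0)
      - (if l = 0 then (if j = 0 then y j * w l else 0) else 0))"
    by (intro sum.cong refl) (simp add: sbp_Q_plus_transpose[OF assms])
  also have "\<dots> = y n * w n - y 0 * w 0"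
    by (simp add: sum_subtractf)
  finally show ?thesis .
qed

lemma sbp_quadratic_form:
  assumes "sbp n p x h Q"
  shows "(\<Sum>j=0..n. \<Sum>l=0..n. y j * Q j l * y l) = ((y n)\<^sup>2 - (y 0)\<^sup>2) / 2"
  using sbp_summation_by_parts[OF assms, of y y] by (simp add: power2_eq_square)

lemma deriv_monomial_sum:
  fixes d :: "'a \<Rightarrow> real"
  shows "deriv (\<lambda>z. \<Sum>a\<in>A. d a * z ^ e a) y = (\<Sum>a\<in>A. d a * (of_nat (e a) * y ^ (e a - 1 :: nat)))"
  by (intro DERIV_imp_deriv DERIV_sum DERIV_cmult DERIV_pow[unfolded One_nat_def[symmetric]])

lemma sbp_exact_deriv:
  assumes "sbp n p x h Q" "i \<le> n" "finite A" "\<forall>a\<in>A. e a \<le> p"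
    and f: "\<And>z. f z = (\<Sum>a\<in>A. d a * z ^ e a)"
  shows "(\<Sum>l=0..n. Q i l * f (x l)) / h i = deriv f (x i)"
proof -
  have "(\<Sum>l=0..n. Q i l * f (x l)) / h i = (\<Sum>a\<in>A. d a * ((\<Sum>l=0..n. Q i l * x l ^ e a) / h i))"
    unfolding f by (simp add: sum_distrib_left sum_divide_distrib mult_ac sum.swap[of _ A])
  also have "\<dots> = (\<Sum>a\<in>A. d a * (of_nat (e a) * x i ^ (e a - 1)))"
    using assms(2,4) by (intro sum.cong refl) (simp add: sbp_exact_monomial[OF assms(1)])
  also have "\<dots> = deriv f (x i)"
    unfolding f[abs_def] by (rule deriv_monomial_sum[symmetric])
  finally show ?thesis .
qed

definition Qtilde :: "nat \<Rightarrow> (nat \<Rightarrow> nat \<Rightarrow> real) \<Rightarrow> (nat \<Rightarrow> real) \<Rightarrow> nat \<Rightarrow> real" where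
  "Qtilde n Q w j = (\<Sum>l=0..n. Q j l * w l)
     - (1/2) * ((if j = n then w n - w 0 else 0) - (if j = 0 then w 0 - w n else 0))"

lemma Dxt_eq_Qtilde: "Dxt nx hx Qx u i j = Qtilde nx Qx (u i) j / hx j"
  unfolding Dxt_def Dx_def Qtilde_def by (simp add: diff_divide_distrib)

lemma Qtilde_skew:
  assumes "sbp n p x h Q"
  shows "(\<Sum>j=0..n. y j * Qtilde n Q w j) = - (\<Sum>j=0..n. w j * Qtilde n Q y j)"
proof -
  have expand: "(\<Sum>j=0..n. y j * Qtilde n Q w j) = (\<Sum>j=0..n. \<Sum>l=0..n. y j * Q j l * w l)
     - (1/2) * (y n * (w n - w 0) - y 0 * (w 0 - w n))" for y w
  proof -
    have "(\<Sum>j=0..n. y j * Qtilde n Q w j) = (\<Sum>j=0..n. \<Sum>l=0..n. y j * Q j l * w l)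
       - (1/2) * (\<Sum>j=0..n. y j * ((if j = n then w n - w 0 else 0) - (if j = 0 then w 0 - w n else 0)))"
      unfolding Qtilde_def by (simp add: right_diff_distrib sum_subtractf sum_distrib_left mult_ac)
    then show ?thesis by (simp only: sum_boundary_indicators)
  qed
  show ?thesis
    using sbp_summation_by_parts[OF assms, of y w] unfolding expand by (simp add: algebra_simps)
qed

lemma Dxt_skew_adjoint:
  assumes "sbp nx px xs hx Qx"
  shows "(\<Sum>j=0..nx. hx j * y i j * Dxt nx hx Qx w i j) = - (\<Sum>j=0..nx. hx j * w i j * Dxt nx hx Qx y i j)"
proof -
  have weighted: "(\<Sum>j=0..nx. hx j * z i j * Dxt nx hx Qx u i j) = (\<Sum>j=0..nx. z i j * Qtilde nx Qx (u i) j)"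
    for z u
    using sbp_weight_pos[OF assms] by (intro sum.cong refl) (force simp: Dxt_eq_Qtilde)
  show ?thesis
    unfolding weighted by (rule Qtilde_skew[OF assms])
qed

lemma Dt_scale: "Dt nt ht Qt (\<lambda>i j. c * u i j) i j = c * Dt nt ht Qt u i j"
  unfolding Dt_def by (simp add: sum_distrib_left mult_ac)

lemma Dxt_scale: "Dxt nx hx Qx (\<lambda>i j. c * u i j) i j = c * Dxt nx hx Qx u i j"
  unfolding Dxt_def Dx_def by (simp add: sum_distrib_left field_simps)

lemma sat_scale: "sat ht (\<lambda>i j. c * u i j) (\<lambda>j. c * u0 j) i j = c * sat ht u u0 i j"
  unfolding sat_def by (simp add: field_simps)

lemma Dxt_periodic: "u i nx = u i 0 \<Longrightarrow> Dxt nx hx Qx u i j = (\<Sum>l=0..nx. Qx j l * u i l) / hx j"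
  unfolding Dxt_def Dx_def by simp

lemma Dxt_cong:
  assumes "\<And>l. l \<le> nx \<Longrightarrow> u i l = w i l"
  shows "Dxt nx hx Qx u i j = Dxt nx hx Qx w i j"
proof -
  have "(\<Sum>l=0..nx. Qx j l * u i l) = (\<Sum>l=0..nx. Qx j l * w i l)"
    using assms by (intro sum.cong) auto
  then show ?thesis
    unfolding Dxt_def Dx_def using assms by simp
qed

definition H_inner :: "nat \<Rightarrow> (nat \<Rightarrow> real) \<Rightarrow> nat \<Rightarrow> (nat \<Rightarrow> real) \<Rightarrow> gf \<Rightarrow> gf \<Rightarrow> real" where
  "H_inner nt ht nx hx u w = (\<Sum>i=0..nt. \<Sum>j=0..nx. ht i * hx j * u i j * w i j)"

lemma H_inner_self_nonneg:
  "(\<And>i. i \<le> nt \<Longrightarrow> 0 \<le> ht i) \<Longrightarrow> (\<And>j. j \<le> nx \<Longrightarrow> 0 \<le> hx j) \<Longrightarrow>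
     0 \<le> H_inner nt ht nx hx u u"
  unfolding H_inner_def by (intro sum_nonneg) (simp add: mult.assoc)

lemma H_inner_Dt:
  assumes "sbp nt pt ts ht Qt"
  shows "H_inner nt ht nx hx u (Dt nt ht Qt u) = (\<Sum>j=0..nx. hx j * ((u nt j)\<^sup>2 - (u 0 j)\<^sup>2)) / 2"
proof -
  have "H_inner nt ht nx hx u (Dt nt ht Qt u)
      = (\<Sum>i=0..nt. \<Sum>j=0..nx. hx j * (u i j * (\<Sum>l=0..nt. Qt i l * u l j)))"
    unfolding H_inner_def Dt_def
    using sbp_weight_pos[OF assms] by (intro sum.cong refl) force
  also have "\<dots> = (\<Sum>j=0..nx. hx j * (\<Sum>i=0..nt. \<Sum>l=0..nt. u i j * Qt i l * u l j))"
    by (subst sum.swap) (simp add: sum_distrib_left mult_ac)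
  also have "\<dots> = (\<Sum>j=0..nx. hx j * ((u nt j)\<^sup>2 - (u 0 j)\<^sup>2)) / 2"
    by (simp add: sbp_quadratic_form[OF assms] sum_divide_distrib)
  finally show ?thesis .
qed

lemma H_inner_diffusion_nonpos:
  assumes "sbp nx px xs hx Qx" "\<And>i. i \<le> nt \<Longrightarrow> 0 \<le> ht i" "0 \<le> c"
  shows "H_inner nt ht nx hx u (Dxt nx hx Qx (\<lambda>i j. c * Dxt nx hx Qx u i j)) \<le> 0"
proof -
  let ?D = "Dxt nx hx Qx (\<lambda>i j. c * Dxt nx hx Qx u i j)"
  have level: "(\<Sum>j=0..nx. ht i * hx j * u i j * ?D i j)
      = - (ht i * c) * (\<Sum>j=0..nx. hx j * (Dxt nx hx Qx u i j)\<^sup>2)" for i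
  proof -
    have "(\<Sum>j=0..nx. hx j * u i j * ?D i j) = - c * (\<Sum>j=0..nx. hx j * (Dxt nx hx Qx u i j)\<^sup>2)"
      using Dxt_skew_adjoint[OF assms(1), of u i "\<lambda>i j. c * Dxt nx hx Qx u i j"]
      by (simp add: sum_distrib_left sum_negf power2_eq_square mult_ac)
    then show ?thesis
      by (simp add: sum_distrib_left[symmetric] mult.assoc)
  qed
  have "0 \<le> (\<Sum>j=0..nx. hx j * (Dxt nx hx Qx u i j)\<^sup>2)" for i
    using sbp_weight_pos[OF assms(1)] by (intro sum_nonneg) (simp add: less_imp_le)
  then show ?thesis
    unfolding H_inner_def level using assms(2,3)
    by (intro sum_nonpos) (simp add: mult_nonneg_nonpos)
qed

lemma H_inner_sat:
  assumes "ht 0 \<noteq> 0"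
  shows "H_inner nt ht nx hx u (sat ht u u0) = (\<Sum>j=0..nx. hx j * u 0 j * (u 0 j - u0 j))"
proof -
  have "ht i * hx j * u i j * sat ht u u0 i j = (if i = 0 then hx j * u 0 j * (u 0 j - u0 j) else 0)"
    for i j
    using assms by (simp add: sat_def)
  then show ?thesis
    unfolding H_inner_def by (subst sum.swap) (simp add: sum.delta)
qed

lemma H_inner_Dt_plus_sat:
  assumes "sbp nt pt ts ht Qt"
  shows "H_inner nt ht nx hx u (Dt nt ht Qt u) + H_inner nt ht nx hx u (sat ht u u0)
      = (1/2) * (\<Sum>j=0..nx. hx j * (u nt j)\<^sup>2) - (1/2) * (\<Sum>j=0..nx. hx j * (u0 j)\<^sup>2)
        + (1/2) * (\<Sum>j=0..nx. hx j * (u 0 j - u0 j)\<^sup>2)"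
proof -
  have "hx j * ((u nt j)\<^sup>2 - (u 0 j)\<^sup>2) / 2 + hx j * u 0 j * (u 0 j - u0 j)
      = (1/2) * (hx j * (u nt j)\<^sup>2) - (1/2) * (hx j * (u0 j)\<^sup>2) + (1/2) * (hx j * (u 0 j - u0 j)\<^sup>2)"
    for j
    by (simp add: field_simps power2_eq_square)
  then show ?thesis
    using sbp_weight_pos[OF assms, of 0]
    by (simp add: H_inner_Dt[OF assms] H_inner_sat sum_divide_distrib sum.distrib[symmetric]
        sum_subtractf[symmetric] sum_distrib_left)
qed

lemma lim_scheme_energy_estimate:
  assumes SBPt: "sbp nt pt ts ht Qt" and SBPx: "sbp nx px xs hx Qx"
    and "\<forall>k\<in>{1..nv}. 0 \<le> \<omega> k" "0 \<le> \<sigma>s" "0 \<le> \<sigma>a"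
    and "lim_scheme nt ht Qt nx hx Qx nv v \<omega> \<sigma>s \<sigma>a \<rho>0 \<rho>"
  shows "(1/2) * (\<Sum>j=0..nx. hx j * (\<rho> nt j)\<^sup>2) \<le> (1/2) * (\<Sum>j=0..nx. hx j * (\<rho>0 j)\<^sup>2)"
proof -
  define c where "c = (\<Sum>k=1..nv. \<omega> k * v k ^ 2) / \<sigma>s"
  have "0 \<le> c"
    unfolding c_def using assms(3,4) by (intro divide_nonneg_nonneg sum_nonneg) auto
  have ht_nonneg: "\<And>i. i \<le> nt \<Longrightarrow> 0 \<le> ht i" and hx_nonneg: "\<And>j. j \<le> nx \<Longrightarrow> 0 \<le> hx j"
    using sbp_weight_pos[OF SBPt] sbp_weight_pos[OF SBPx] by (auto simp: less_imp_le)
  let ?R = "lim_res nt ht Qt nx hx Qx nv v \<omega> \<sigma>s \<sigma>a \<rho>0 \<rho>"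
  have "H_inner nt ht nx hx \<rho> ?R = 0"
    using assms(6) unfolding H_inner_def lim_scheme_def by simp
  moreover have "H_inner nt ht nx hx \<rho> ?R
      = H_inner nt ht nx hx \<rho> (Dt nt ht Qt \<rho>)
        - H_inner nt ht nx hx \<rho> (Dxt nx hx Qx (\<lambda>i j. c * Dxt nx hx Qx \<rho> i j))
        + \<sigma>a * H_inner nt ht nx hx \<rho> \<rho> + H_inner nt ht nx hx \<rho> (sat ht \<rho> \<rho>0)"
    unfolding H_inner_def lim_res_def c_def
    by (simp add: algebra_simps sum.distrib sum_subtractf sum_distrib_left)
  moreover have "H_inner nt ht nx hx \<rho> (Dt nt ht Qt \<rho>) + H_inner nt ht nx hx \<rho> (sat ht \<rho> \<rho>0)
      = (1/2) * (\<Sum>j=0..nx. hx j * (\<rho> nt j)\<^sup>2) - (1/2) * (\<Sum>j=0..nx. hx j * (\<rho>0 j)\<^sup>2)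
        + (1/2) * (\<Sum>j=0..nx. hx j * (\<rho> 0 j - \<rho>0 j)\<^sup>2)"
    by (rule H_inner_Dt_plus_sat[OF SBPt])
  moreover have "0 \<le> (\<Sum>j=0..nx. hx j * (\<rho> 0 j - \<rho>0 j)\<^sup>2)"
    using hx_nonneg by (intro sum_nonneg) simp
  moreover have "H_inner nt ht nx hx \<rho> (Dxt nx hx Qx (\<lambda>i j. c * Dxt nx hx Qx \<rho> i j)) \<le> 0"
    using H_inner_diffusion_nonpos[OF SBPx ht_nonneg \<open>0 \<le> c\<close>] .
  moreover have "0 \<le> \<sigma>a * H_inner nt ht nx hx \<rho> \<rho>"
    using assms(5) H_inner_self_nonneg[OF ht_nonneg hx_nonneg] by simp
  ultimately show ?thesis by linarith
qed

lemma Dt_tendsto: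
  assumes "\<And>l. l \<le> nt \<Longrightarrow> ((\<lambda>e. u e l j) \<longlongrightarrow> a l j) F"
  shows "((\<lambda>e. Dt nt ht Qt (u e) i j) \<longlongrightarrow> Dt nt ht Qt a i j) F"
  unfolding Dt_def divide_inverse using assms
  by (intro tendsto_mult_right tendsto_sum tendsto_mult_left) auto

lemma Dxt_tendsto:
  assumes "\<And>l. l \<le> nx \<Longrightarrow> ((\<lambda>e. u e i l) \<longlongrightarrow> a i l) F"
  shows "((\<lambda>e. Dxt nx hx Qx (u e) i j) \<longlongrightarrow> Dxt nx hx Qx a i j) F"
  unfolding Dxt_def Dx_def divide_inverse using assms
  by (intro tendsto_diff tendsto_mult_right tendsto_sum tendsto_mult_left) (auto intro!: tendsto_intros)

lemma sat_tendsto: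
  assumes "((\<lambda>e. u e 0 j) \<longlongrightarrow> a 0 j) F" "((\<lambda>e. u0 e j) \<longlongrightarrow> a0 j) F"
  shows "((\<lambda>e. sat ht (u e) (u0 e) i j) \<longlongrightarrow> sat ht a a0 i j) F"
  unfolding sat_def divide_inverse using assms by (auto intro!: tendsto_intros)

lemma vavg_tendsto:
  assumes "\<And>k. k \<in> {1..nv} \<Longrightarrow> ((\<lambda>e. f e k i j) \<longlongrightarrow> a k i j) F"
  shows "((\<lambda>e. vavg nv \<omega> (f e) i j) \<longlongrightarrow> vavg nv \<omega> a i j) F"
  unfolding vavg_def using assms by (intro tendsto_sum tendsto_mult_left) auto

lemma scheme_micro_rescaled:
  assumes "scheme nt ht Qt nx hx Qx nv v \<omega> \<sigma>s \<sigma>a e \<rho>0 g0 \<rho> g" "0 < e"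
    and "k \<in> {1..nv}" "i \<le> nt" "j \<le> nx"
  defines "h \<equiv> \<lambda>k i j. e * g k i j"
  shows "\<sigma>s * g k i j = - v k * Dxt nx hx Qx \<rho> i j
      - e * Dt nt ht Qt (h k) i j - v k * Dxt nx hx Qx (h k) i j
      + vavg nv \<omega> (\<lambda>k i j. v k * Dxt nx hx Qx (h k) i j) i j
      - \<sigma>a * e * h k i j - e * sat ht (h k) (\<lambda>j. e * g0 k j) i j"
proof -
  let ?V = "vavg nv \<omega> (\<lambda>k i j. v k * Dxt nx hx Qx (g k) i j) i j"
  have micro: "Dt nt ht Qt (g k) i j + v k / e * Dxt nx hx Qx (g k) i j - 1 / e * ?V
      + v k / e\<^sup>2 * Dxt nx hx Qx \<rho> i j = - (\<sigma>s / e\<^sup>2 + \<sigma>a) * g k i j - sat ht (g k) (g0 k) i j"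
    using assms(1,3-5) unfolding scheme_def by blast
  have "vavg nv \<omega> (\<lambda>k i j. v k * Dxt nx hx Qx (h k) i j) i j = e * ?V"
    unfolding h_def Dxt_scale vavg_def by (simp add: sum_distrib_left mult_ac)
  moreover have "sat ht (h k) (\<lambda>j. e * g0 k j) i j = e * sat ht (g k) (g0 k) i j"
    unfolding h_def by (rule sat_scale)
  ultimately show ?thesis
    using micro \<open>0 < e\<close> unfolding h_def Dt_scale Dxt_scale
    by (simp add: field_simps power2_eq_square)
qed

lemma tendsto_scaled_bounded_0:
  assumes "\<forall>\<^sub>F e in at_right 0. \<bar>f e\<bar> \<le> B"
  shows "((\<lambda>e. e * f e) \<longlongrightarrow> 0) (at_right (0::real))"
proof (rule tendsto_0_le[where K = B])
  show "((\<lambda>e. e) \<longlongrightarrow> 0) (at_right (0::real))"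
    by (rule tendsto_ident_at)
  show "\<forall>\<^sub>F e in at_right 0. norm (e * f e) \<le> norm e * B"
    using assms by eventually_elim (simp add: abs_mult mult_left_mono)
qed

lemma scheme_micro_tendsto:
  assumes "0 < \<sigma>s"
    and sch: "\<forall>\<^sub>F e in at_right 0. scheme nt ht Qt nx hx Qx nv v \<omega> \<sigma>s \<sigma>a e \<rho>0 g0 (\<rho> e) (g e)"
    and lim: "\<forall>i\<le>nt. \<forall>j\<le>nx. ((\<lambda>e. \<rho> e i j) \<longlongrightarrow> \<rho>lim i j) (at_right 0)"
    and bnd: "\<forall>\<^sub>F e in at_right 0. \<forall>k\<in>{1..nv}. \<forall>i\<le>nt. \<forall>j\<le>nx. \<bar>g e k i j\<bar> \<le> B"
    and k: "k \<in> {1..nv}" and i: "i \<le> nt" and j: "j \<le> nx"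
  shows "((\<lambda>e. g e k i j) \<longlongrightarrow> - v k * Dxt nx hx Qx \<rho>lim i j / \<sigma>s) (at_right 0)"
proof -
  let ?F = "at_right (0::real)"
  define h where "h e = (\<lambda>k i j. e * g e k i j)" for e
  have h_tendsto_0: "((\<lambda>e. h e k' i' j') \<longlongrightarrow> 0) ?F"
    if "k' \<in> {1..nv}" "i' \<le> nt" "j' \<le> nx" for k' i' j'
    unfolding h_def using that
    by (intro tendsto_scaled_bounded_0[where B = B] eventually_mono[OF bnd]) blast
  let ?num = "\<lambda>e. - v k * Dxt nx hx Qx (\<rho> e) i j
      - e * Dt nt ht Qt (h e k) i j - v k * Dxt nx hx Qx (h e k) i j
      + vavg nv \<omega> (\<lambda>k i j. v k * Dxt nx hx Qx (h e k) i j) i j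
      - \<sigma>a * e * h e k i j - e * sat ht (h e k) (\<lambda>j. e * g0 k j) i j"
  have "\<forall>\<^sub>F e in ?F. ?num e / \<sigma>s = g e k i j"
    using sch eventually_at_right_less
  proof eventually_elim
    case (elim e)
    then show ?case
      using scheme_micro_rescaled[OF elim k i j] \<open>0 < \<sigma>s\<close>
      unfolding h_def by (simp add: field_simps)
  qed
  moreover have "(?num \<longlongrightarrow> - v k * Dxt nx hx Qx \<rho>lim i j) ?F"
  proof -
    let ?zero = "\<lambda>i j. 0 :: real"
    have "(?num \<longlongrightarrow> - v k * Dxt nx hx Qx \<rho>lim i j - 0 * Dt nt ht Qt ?zero i j
        - v k * Dxt nx hx Qx ?zero i j + vavg nv \<omega> (\<lambda>k i j. v k * Dxt nx hx Qx ?zero i j) i j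
        - \<sigma>a * 0 * 0 - 0 * sat ht ?zero (\<lambda>j. 0 * g0 k j) i j) ?F"
      using lim i j k
      by (intro tendsto_intros tendsto_ident_at Dt_tendsto Dxt_tendsto vavg_tendsto sat_tendsto
          h_tendsto_0) auto
    moreover have "Dxt nx hx Qx ?zero i j = 0" "vavg nv \<omega> (\<lambda>k i j. v k * Dxt nx hx Qx ?zero i j) i j = 0"
      by (simp_all add: Dxt_def Dx_def vavg_def)
    ultimately show ?thesis by simp
  qed
  then have "((\<lambda>e. ?num e / \<sigma>s) \<longlongrightarrow> - v k * Dxt nx hx Qx \<rho>lim i j / \<sigma>s) ?F"
    using \<open>0 < \<sigma>s\<close> by (intro tendsto_divide tendsto_const) auto
  ultimately show ?thesis
    by (rule Lim_transform_eventually[rotated])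
qed

lemma scheme_limit_solves_lim_scheme:
  assumes "0 < \<sigma>s"
    and sch: "\<forall>\<^sub>F e in at_right 0. scheme nt ht Qt nx hx Qx nv v \<omega> \<sigma>s \<sigma>a e \<rho>0 g0 (\<rho> e) (g e)"
    and lim: "\<forall>i\<le>nt. \<forall>j\<le>nx. ((\<lambda>e. \<rho> e i j) \<longlongrightarrow> \<rho>lim i j) (at_right 0)"
    and bnd: "\<forall>\<^sub>F e in at_right 0. \<forall>k\<in>{1..nv}. \<forall>i\<le>nt. \<forall>j\<le>nx. \<bar>g e k i j\<bar> \<le> B"
  shows "lim_scheme nt ht Qt nx hx Qx nv v \<omega> \<sigma>s \<sigma>a \<rho>0 \<rho>lim"
  unfolding lim_scheme_def
proof (intro allI impI)
  fix i j assume i: "i \<le> nt" and j: "j \<le> nx"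
  let ?F = "at_right (0::real)"
  define c where "c = (\<Sum>k=1..nv. \<omega> k * v k ^ 2) / \<sigma>s"
  let ?flux = "\<lambda>e. vavg nv \<omega> (\<lambda>k i j. v k * g e k i j)"
  have flux_limit: "((\<lambda>e. ?flux e i l) \<longlongrightarrow> - c * Dxt nx hx Qx \<rho>lim i l) ?F" if "l \<le> nx" for l
  proof -
    have "((\<lambda>e. ?flux e i l) \<longlongrightarrow> vavg nv \<omega> (\<lambda>k i j. v k * (- v k * Dxt nx hx Qx \<rho>lim i j / \<sigma>s)) i l) ?F"
      using scheme_micro_tendsto[OF assms _ i that] by (intro vavg_tendsto tendsto_mult_left) auto
    moreover have "vavg nv \<omega> (\<lambda>k i j. v k * (- v k * Dxt nx hx Qx \<rho>lim i j / \<sigma>s)) i l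
        = - c * Dxt nx hx Qx \<rho>lim i l"
      unfolding vavg_def c_def
      by (simp add: sum_distrib_left sum_negf power2_eq_square mult_ac flip: sum_divide_distrib)
    ultimately show ?thesis by simp
  qed
  have "\<forall>\<^sub>F e in ?F. Dt nt ht Qt (\<rho> e) i j + Dxt nx hx Qx (?flux e) i j
      = - \<sigma>a * \<rho> e i j - sat ht (\<rho> e) \<rho>0 i j"
    using sch by eventually_elim (use i j in \<open>simp add: scheme_def\<close>)
  moreover have "((\<lambda>e. Dt nt ht Qt (\<rho> e) i j + Dxt nx hx Qx (?flux e) i j)
      \<longlongrightarrow> Dt nt ht Qt \<rho>lim i j + Dxt nx hx Qx (\<lambda>i j. - c * Dxt nx hx Qx \<rho>lim i j) i j) ?F"
    using lim j flux_limit by (intro tendsto_add Dt_tendsto Dxt_tendsto) auto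
  ultimately have "((\<lambda>e. - \<sigma>a * \<rho> e i j - sat ht (\<rho> e) \<rho>0 i j)
      \<longlongrightarrow> Dt nt ht Qt \<rho>lim i j + Dxt nx hx Qx (\<lambda>i j. - c * Dxt nx hx Qx \<rho>lim i j) i j) ?F"
    by (rule Lim_transform_eventually[rotated])
  moreover have "((\<lambda>e. - \<sigma>a * \<rho> e i j - sat ht (\<rho> e) \<rho>0 i j)
      \<longlongrightarrow> - \<sigma>a * \<rho>lim i j - sat ht \<rho>lim \<rho>0 i j) ?F"
    using lim i j by (intro tendsto_diff tendsto_mult_left sat_tendsto tendsto_const) auto
  ultimately have "Dt nt ht Qt \<rho>lim i j + Dxt nx hx Qx (\<lambda>i j. - c * Dxt nx hx Qx \<rho>lim i j) i j
      = - \<sigma>a * \<rho>lim i j - sat ht \<rho>lim \<rho>0 i j"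
    by (rule tendsto_unique[OF trivial_limit_at_right_real])
  then show "lim_res nt ht Qt nx hx Qx nv v \<omega> \<sigma>s \<sigma>a \<rho>0 \<rho>lim i j = 0"
    unfolding lim_res_def c_def Dxt_scale by simp
qed

lemma lim_res_polynomial:
  assumes SBPt: "sbp nt pt ts ht Qt" and SBPx: "sbp nx px xs hx Qx"
    and u: "\<And>t x. u t x = (\<Sum>a=0..pt. \<Sum>b=0..px. c a b * t ^ a * x ^ b)"
    and per: "\<And>t. u t (xs 0) = u t (xs nx)"
    and dper: "\<And>t. deriv (\<lambda>y. u t y) (xs 0) = deriv (\<lambda>y. u t y) (xs nx)"
    and i: "i \<le> nt" and j: "j \<le> nx"
  shows "lim_res nt ht Qt nx hx Qx nv v \<omega> \<sigma>s \<sigma>a (\<lambda>j. u (ts 0) (xs j)) (\<lambda>i j. u (ts i) (xs j)) i j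
    = deriv (\<lambda>s. u s (xs j)) (ts i)
      - (\<Sum>k=1..nv. \<omega> k * v k ^ 2) * deriv (\<lambda>y. (1 / \<sigma>s) * deriv (\<lambda>z. u (ts i) z) y) (xs j)
      + \<sigma>a * u (ts i) (xs j)"
proof -
  define S where "S = (\<Sum>k=1..nv. \<omega> k * v k ^ 2)"
  define K where "K t b = (\<Sum>a=0..pt. c a b * t ^ a)" for t b
  define w where "w t y = (1 / \<sigma>s) * deriv (\<lambda>z. u t z) y" for t y
  have u_in_t: "u s x = (\<Sum>a\<in>{0..pt}. (\<Sum>b=0..px. c a b * x ^ b) * s ^ a)" for s x
    unfolding u by (simp add: sum_distrib_left sum_distrib_right mult_ac)
  have u_in_x: "u t z = (\<Sum>b\<in>{0..px}. K t b * z ^ b)" for t z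
    unfolding u K_def by (subst sum.swap) (simp add: sum_distrib_right)
  have w_in_x: "w t y = (\<Sum>b\<in>{0..px}. (K t b * of_nat b / \<sigma>s) * y ^ (b - 1))" for t y
    unfolding w_def u_in_x deriv_monomial_sum by (simp add: sum_distrib_left mult_ac)
  have time: "Dt nt ht Qt (\<lambda>i j. u (ts i) (xs j)) i j = deriv (\<lambda>s. u s (xs j)) (ts i)"
    unfolding Dt_def by (rule sbp_exact_deriv[OF SBPt i, where f = "\<lambda>s. u s (xs j)"]) (auto simp: u_in_t)
  have space: "Dxt nx hx Qx (\<lambda>i j. u (ts i) (xs j)) i' l = deriv (\<lambda>z. u (ts i') z) (xs l)"
    if "l \<le> nx" for i' l
  proof -
    have "Dxt nx hx Qx (\<lambda>i j. u (ts i) (xs j)) i' l = (\<Sum>m=0..nx. Qx l m * u (ts i') (xs m)) / hx l"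
      by (rule Dxt_periodic) (simp add: per)
    also have "\<dots> = deriv (\<lambda>z. u (ts i') z) (xs l)"
      by (rule sbp_exact_deriv[OF SBPx that, where f = "\<lambda>z. u (ts i') z"]) (auto simp: u_in_x)
    finally show ?thesis .
  qed
  have diffusion: "Dxt nx hx Qx (\<lambda>i j. S / \<sigma>s * Dxt nx hx Qx (\<lambda>i j. u (ts i) (xs j)) i j) i j
      = S * deriv (w (ts i)) (xs j)"
  proof -
    have "Dxt nx hx Qx (\<lambda>i j. S / \<sigma>s * Dxt nx hx Qx (\<lambda>i j. u (ts i) (xs j)) i j) i j
        = Dxt nx hx Qx (\<lambda>i j. S * w (ts i) (xs j)) i j"
      by (rule Dxt_cong) (simp add: space w_def)
    also have "\<dots> = S * Dxt nx hx Qx (\<lambda>i j. w (ts i) (xs j)) i j"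
      by (rule Dxt_scale)
    also have "Dxt nx hx Qx (\<lambda>i j. w (ts i) (xs j)) i j = (\<Sum>m=0..nx. Qx j m * w (ts i) (xs m)) / hx j"
      by (rule Dxt_periodic) (simp add: w_def dper)
    also have "\<dots> = deriv (w (ts i)) (xs j)"
      by (rule sbp_exact_deriv[OF SBPx j, where f = "w (ts i)" and A = "{0..px}" and e = "\<lambda>b. b - 1"
          and d = "\<lambda>b. K (ts i) b * of_nat b / \<sigma>s"])
        (auto simp: w_in_x)
    finally show ?thesis .
  qed
  show ?thesis
    unfolding lim_res_def time diffusion[unfolded S_def]
    by (simp add: sat_def w_def[abs_def])
qed

theorem theorem3p5:
  fixes nt nx nv pt px :: nat
    and ts ht xs hx v \<omega> :: "nat \<Rightarrow> real"
    and Qt Qx :: "nat \<Rightarrow> nat \<Rightarrow> real"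
    and \<sigma>s \<sigma>a :: real
  assumes SBPt: "sbp nt pt ts ht Qt"
    and SBPx: "sbp nx px xs hx Qx"
    and nv: "1 \<le> nv"
    and wpos: "\<forall>k\<in>{1..nv}. 0 < \<omega> k"
    and wsum: "(\<Sum>k=1..nv. \<omega> k) = 1"
    and wmean: "(\<Sum>k=1..nv. \<omega> k * v k) = 0"
    and sigs: "0 < \<sigma>s"
    and siga: "0 \<le> \<sigma>a"
  shows
    \<comment> \<open>(1) asymptotic limit: eps -> 0 with bounded micro part gives the limit scheme\<close>
    "(\<forall>(\<rho> :: real \<Rightarrow> gf) (g :: real \<Rightarrow> nat \<Rightarrow> gf) (\<rho>lim :: gf) \<rho>0 g0.
        (\<forall>\<^sub>F \<epsilon> in at_right 0. scheme nt ht Qt nx hx Qx nv v \<omega> \<sigma>s \<sigma>a \<epsilon> \<rho>0 g0 (\<rho> \<epsilon>) (g \<epsilon>)) \<and>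
        (\<forall>i\<le>nt. \<forall>j\<le>nx. ((\<lambda>\<epsilon>. \<rho> \<epsilon> i j) \<longlongrightarrow> \<rho>lim i j) (at_right 0)) \<and>
        (\<exists>B. \<forall>\<^sub>F \<epsilon> in at_right 0. \<forall>k\<in>{1..nv}. \<forall>i\<le>nt. \<forall>j\<le>nx. \<bar>g \<epsilon> k i j\<bar> \<le> B)
        \<longrightarrow> lim_scheme nt ht Qt nx hx Qx nv v \<omega> \<sigma>s \<sigma>a \<rho>0 \<rho>lim)
     \<and>
    \<comment> \<open>(2) consistency: on periodic polynomial data of degree <= pt in t and <= px in x the
        limit-scheme residual equals the residual of the limit PDE at the grid points\<close>
     (\<forall>(c :: nat \<Rightarrow> nat \<Rightarrow> real) (u :: real \<Rightarrow> real \<Rightarrow> real).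
        (\<forall>t x. u t x = (\<Sum>a=0..pt. \<Sum>b=0..px. c a b * t ^ a * x ^ b)) \<and>
        (\<forall>t. u t (xs 0) = u t (xs nx)) \<and>
        (\<forall>t. deriv (\<lambda>y. u t y) (xs 0) = deriv (\<lambda>y. u t y) (xs nx))
        \<longrightarrow> (\<forall>i\<le>nt. \<forall>j\<le>nx.
              lim_res nt ht Qt nx hx Qx nv v \<omega> \<sigma>s \<sigma>a (\<lambda>j. u (ts 0) (xs j))
                 (\<lambda>i j. u (ts i) (xs j)) i j
              = deriv (\<lambda>s. u s (xs j)) (ts i)
                - (\<Sum>k=1..nv. \<omega> k * v k ^ 2) * deriv (\<lambda>y. (1 / \<sigma>s) * deriv (\<lambda>z. u (ts i) z) y) (xs j)
                + \<sigma>a * u (ts i) (xs j)))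
     \<and>
    \<comment> \<open>(3) stability: energy at the final time bounded by the initial data\<close>
     (\<forall>(\<rho> :: gf) \<rho>0.
        lim_scheme nt ht Qt nx hx Qx nv v \<omega> \<sigma>s \<sigma>a \<rho>0 \<rho> \<longrightarrow>
        (1/2) * (\<Sum>j=0..nx. hx j * (\<rho> nt j)\<^sup>2) \<le> (1/2) * (\<Sum>j=0..nx. hx j * (\<rho>0 j)\<^sup>2))"
proof (intro conjI allI impI)
  fix \<rho> :: "real \<Rightarrow> gf" and g :: "real \<Rightarrow> nat \<Rightarrow> gf" and \<rho>lim :: gf and \<rho>0 g0
  assume "(\<forall>\<^sub>F \<epsilon> in at_right 0. scheme nt ht Qt nx hx Qx nv v \<omega> \<sigma>s \<sigma>a \<epsilon> \<rho>0 g0 (\<rho> \<epsilon>) (g \<epsilon>)) \<and>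
    (\<forall>i\<le>nt. \<forall>j\<le>nx. ((\<lambda>\<epsilon>. \<rho> \<epsilon> i j) \<longlongrightarrow> \<rho>lim i j) (at_right 0)) \<and>
    (\<exists>B. \<forall>\<^sub>F \<epsilon> in at_right 0. \<forall>k\<in>{1..nv}. \<forall>i\<le>nt. \<forall>j\<le>nx. \<bar>g \<epsilon> k i j\<bar> \<le> B)"
  then show "lim_scheme nt ht Qt nx hx Qx nv v \<omega> \<sigma>s \<sigma>a \<rho>0 \<rho>lim"
    using scheme_limit_solves_lim_scheme[OF sigs] by blast
next
  fix c :: "nat \<Rightarrow> nat \<Rightarrow> real" and u :: "real \<Rightarrow> real \<Rightarrow> real" and i j
  assume "(\<forall>t x. u t x = (\<Sum>a=0..pt. \<Sum>b=0..px. c a b * t ^ a * x ^ b)) \<and>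
    (\<forall>t. u t (xs 0) = u t (xs nx)) \<and>
    (\<forall>t. deriv (\<lambda>y. u t y) (xs 0) = deriv (\<lambda>y. u t y) (xs nx))" "i \<le> nt" "j \<le> nx"
  then show "lim_res nt ht Qt nx hx Qx nv v \<omega> \<sigma>s \<sigma>a (\<lambda>j. u (ts 0) (xs j)) (\<lambda>i j. u (ts i) (xs j)) i j
      = deriv (\<lambda>s. u s (xs j)) (ts i)
        - (\<Sum>k=1..nv. \<omega> k * v k ^ 2) * deriv (\<lambda>y. (1 / \<sigma>s) * deriv (\<lambda>z. u (ts i) z) y) (xs j)
        + \<sigma>a * u (ts i) (xs j)"
    by (intro lim_res_polynomial[OF SBPt SBPx]) auto
next
  fix \<rho> :: gf and \<rho>0
  assume "lim_scheme nt ht Qt nx hx Qx nv v \<omega> \<sigma>s \<sigma>a \<rho>0 \<rho>"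
  then show "(1/2) * (\<Sum>j=0..nx. hx j * (\<rho> nt j)\<^sup>2) \<le> (1/2) * (\<Sum>j=0..nx. hx j * (\<rho>0 j)\<^sup>2)"
    using wpos sigs by (intro lim_scheme_energy_estimate[OF SBPt SBPx _ _ siga]) auto
qed

end
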